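(* Under the standing assumptions, suppose $\bar u\in X\setminus\{0\}$ satisfies $\bar\lambda:=R(\bar u)=\max_{u\in X\setminus\{0\}}R(u)<\infty$, and let $\bar\zeta\in\partial J(\bar u)$. Then $\bar\zeta/\bar\lambda\in\partial H(\bar u)$; that is, $\bar u$ is a $p$-eigenvector of $J$ with subgradient $\bar\zeta$ and eigenvalue $\bar\lambda$.
   Context: Standing assumptions: $X$ is a real reflexive Banach space with dual $X^*$ and duality pairing $\langle\cdot,\cdot\rangle$; $\Gamma_0(X)$ is the class of proper, lower semi-continuous, convex functionals $X\to\mathbb{R}\cup\{+\infty\}$. Fix $1<p<\infty$ and $q=\frac{p}{p-1}$. Let $J\in\Gamma_0(X)$, and let $H\in\Gamma_0(X)$ be absolutely $p$-homogeneous ($H(tu)=|t|^pH(u)$) such that $|u|_H:=(pH(u))^{1/p}$ is a norm on $X$, so $H(u)=\frac1p|u|_H^p$. The subdifferential is $\partial J(u)=\{\zeta\in X^*:\ J(u)+\langle\zeta,v-u\rangle\le J(v)\ \forall v\in X\}$. Growth assumption: there is $c>0$ with $H(u)\le cJ(u)$ for all $u\in X$. The Rayleigh quotient is $R(u)=J(u)/H(u)$ for $u\ne0$. A $p$-eigenvector of $J$: $u\in X\setminus\{0\}$ with subgradient $\zeta\in\partial J(u)$ and eigenvalue $\lambda=R(u)\in\mathbb{R}$ such that $\zeta\in\lambda\,\partial H(u)$. *)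

theory Defs
  imports "HOL-Analysis.Analysis"
begin

text \<open>The dual space X* is modelled as the bounded linear functionals 'a \<Rightarrow>L real;
  the duality pairing is blinfun application.\<close>

definition reflexive_space :: "'a::banach itself \<Rightarrow> bool" where
  "reflexive_space TYPE('a) \<longleftrightarrow>
     (\<forall>\<Phi> :: ('a \<Rightarrow>\<^sub>L real) \<Rightarrow>\<^sub>L real. \<exists>x::'a. \<forall>f. blinfun_apply \<Phi> f = blinfun_apply f x)"

text \<open>Functionals X \<rightarrow> R \<union> {+\<infinity>} are modelled as ereal-valued functions never taking -\<infinity>.\<close>

definition proper_fun :: "('a \<Rightarrow> ereal) \<Rightarrow> bool" where
  "proper_fun J \<longleftrightarrow> (\<forall>x. J x \<noteq> -\<infinity>) \<and> (\<exists>x. J x \<noteq> \<infinity>)"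

definition lsc_fun :: "('a::topological_space \<Rightarrow> ereal) \<Rightarrow> bool" where
  "lsc_fun J \<longleftrightarrow> (\<forall>a::ereal. closed {x. J x \<le> a})"

definition convex_fun :: "('a::real_vector \<Rightarrow> ereal) \<Rightarrow> bool" where
  "convex_fun J \<longleftrightarrow> (\<forall>x y t. 0 < t \<and> t < 1 \<longrightarrow>
      J (t *\<^sub>R x + (1 - t) *\<^sub>R y) \<le> ereal t * J x + ereal (1 - t) * J y)"

definition Gamma0 :: "('a::real_normed_vector \<Rightarrow> ereal) \<Rightarrow> bool" where
  "Gamma0 J \<longleftrightarrow> proper_fun J \<and> lsc_fun J \<and> convex_fun J"

definition subdiff :: "('a::real_normed_vector \<Rightarrow> ereal) \<Rightarrow> 'a \<Rightarrow> ('a \<Rightarrow>\<^sub>L real) set" where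
  "subdiff J u = {\<zeta>. \<forall>v. J u + ereal (blinfun_apply \<zeta> (v - u)) \<le> J v}"

definition is_norm_fun :: "('a::real_vector \<Rightarrow> real) \<Rightarrow> bool" where
  "is_norm_fun N \<longleftrightarrow> (\<forall>x. 0 \<le> N x) \<and> (\<forall>x. N x = 0 \<longleftrightarrow> x = 0)
     \<and> (\<forall>t x. N (t *\<^sub>R x) = \<bar>t\<bar> * N x) \<and> (\<forall>x y. N (x + y) \<le> N x + N y)"

definition abs_p_homogeneous :: "real \<Rightarrow> ('a::real_vector \<Rightarrow> ereal) \<Rightarrow> bool" where
  "abs_p_homogeneous p H \<longleftrightarrow> (\<forall>t u. H (t *\<^sub>R u) = ereal (\<bar>t\<bar> powr p) * H u)"

text \<open>Rayleigh quotient R(u) = J(u)/H(u) for u \<noteq> 0 (H(u) is finite and positive there).\<close>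

definition rayleigh :: "('a \<Rightarrow> ereal) \<Rightarrow> ('a \<Rightarrow> ereal) \<Rightarrow> 'a \<Rightarrow> ereal" where
  "rayleigh J H u = J u / H u"

definition p_eigenvector ::
  "('a::real_normed_vector \<Rightarrow> ereal) \<Rightarrow> ('a \<Rightarrow> ereal) \<Rightarrow> 'a \<Rightarrow> ('a \<Rightarrow>\<^sub>L real) \<Rightarrow> real \<Rightarrow> bool" where
  "p_eigenvector J H u \<zeta> lam \<longleftrightarrow> u \<noteq> 0 \<and> \<zeta> \<in> subdiff J u \<and> rayleigh J H u = ereal lam
     \<and> (\<exists>\<eta> \<in> subdiff H u. \<zeta> = lam *\<^sub>R \<eta>)"

end

theory Submission
  imports Defs
begin

(* Since R <= lam on X - {0}, the subgradient inequality for J at ubar gives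
   lam H(ubar) + <zeta, v - ubar> <= J(v) <= lam H(v) for every v <> 0.  The origin, where the
   Rayleigh bound says nothing, is recovered by testing with v = ubar/2: there
   H(ubar/2) = 2^(-p) H(ubar) <= H(ubar)/2, which forces <zeta, ubar> >= lam H(ubar).
   The growth condition H <= c J makes lam positive, so dividing by lam gives zeta/lam in dH(ubar). *)

lemma abs_p_homogeneous_zero:
  assumes "abs_p_homogeneous p H"
  shows "H 0 = 0"
  using assms[unfolded abs_p_homogeneous_def, rule_format, of 0 0]
  by (simp add: zero_ereal_def[symmetric])

lemma abs_p_homogeneous_uminus:
  assumes "abs_p_homogeneous p H"
  shows "H (- u) = H u"
  using assms[unfolded abs_p_homogeneous_def, rule_format, of "-1" u] by simp

lemma convex_fun_even_nonneg:
  assumes "convex_fun H" and "H 0 = 0" and "\<And>u. H (- u) = H u"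
  shows "0 \<le> H u"
proof -
  have "H ((1/2) *\<^sub>R u + (1 - 1/2) *\<^sub>R (- u)) \<le> ereal (1/2) * H u + ereal (1 - 1/2) * H (- u)"
    using assms(1)[unfolded convex_fun_def, rule_format, of "1/2" u "- u"] by simp
  then have "0 \<le> ereal (1/2) * H u + ereal (1/2) * H u"
    using assms(2,3) by (simp add: scaleR_minus_right)
  then show ?thesis
    by (cases "H u") auto
qed

lemma abs_p_homogeneous_norm_pos:
  fixes H :: "'a::real_normed_vector \<Rightarrow> ereal"
  assumes "convex_fun H" and "abs_p_homogeneous p H"
    and "is_norm_fun (\<lambda>u. (p * real_of_ereal (H u)) powr (1 / p))" and "u \<noteq> 0"
  shows "0 < H u"
proof -
  have "0 \<le> H u"
    using assms(1,2) abs_p_homogeneous_zero abs_p_homogeneous_uminus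
    by (blast intro: convex_fun_even_nonneg)
  moreover have "(p * real_of_ereal (H u)) powr (1 / p) \<noteq> 0"
    using assms(3,4) unfolding is_norm_fun_def by blast
  then have "H u \<noteq> 0"
    by auto
  ultimately show ?thesis
    by simp
qed

lemma rayleigh_le_iff:
  assumes "0 < H v" and "H v < \<infinity>"
  shows "rayleigh J H v \<le> ereal lam \<longleftrightarrow> J v \<le> ereal lam * H v"
  using assms by (simp add: rayleigh_def ereal_divide_le_pos mult.commute)

lemma rayleigh_eq_iff:
  assumes "0 < H v" and "H v < \<infinity>"
  shows "rayleigh J H v = ereal lam \<longleftrightarrow> J v = ereal lam * H v"
  using assms by (simp add: rayleigh_def ereal_divide_eq mult.commute)

lemma rayleigh_pos_of_growth:
  assumes "H v \<le> ereal c * J v" and "0 < c" and "0 < H v" and "H v < \<infinity>"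
    and "rayleigh J H v = ereal lam"
  shows "0 < lam"
proof -
  obtain h where h: "H v = ereal h" and "0 < h"
    using assms(3,4) by (cases "H v") auto
  have "J v = ereal (lam * h)"
    using assms(3-5) rayleigh_eq_iff[of H v J lam] by (simp add: h)
  then have "h \<le> c * lam * h"
    using assms(1) by (simp add: h mult.assoc)
  then have "1 \<le> c * lam"
    using \<open>0 < h\<close> by simp
  then show ?thesis
    using assms(2) zero_less_mult_pos[of c lam] by linarith
qed

lemma subdiff_homogeneous_at_maximizer:
  fixes J :: "'a::real_normed_vector \<Rightarrow> ereal" and h :: "'a \<Rightarrow> real"
  assumes p: "1 \<le> p" and hom: "abs_p_homogeneous p (\<lambda>v. ereal (h v))"
    and h_nonneg: "0 \<le> h u" and u: "u \<noteq> 0"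
    and le: "\<And>v. v \<noteq> 0 \<Longrightarrow> J v \<le> ereal (lam * h v)"
    and eq: "J u = ereal (lam * h u)" and lam: "0 < lam"
    and zeta: "zeta \<in> subdiff J u"
  shows "inverse lam *\<^sub>R zeta \<in> subdiff (\<lambda>v. ereal (h v)) u"
proof -
  have supp: "lam * h u + zeta (v - u) \<le> lam * h v" if "v \<noteq> 0" for v
  proof -
    have "J u + ereal (zeta (v - u)) \<le> J v"
      using zeta unfolding subdiff_def by blast
    also have "\<dots> \<le> ereal (lam * h v)"
      using le[OF that] .
    finally show ?thesis
      using eq by simp
  qed
  have "lam * h u \<le> zeta u"
  proof -
    have half: "h ((1/2) *\<^sub>R u) = (1/2) powr p * h u"
      using hom[unfolded abs_p_homogeneous_def, rule_format, of "1/2" u] by simp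
    have "(1/2::real) powr p \<le> (1/2) powr 1"
      using p by (intro powr_mono') auto
    then have "h ((1/2) *\<^sub>R u) \<le> h u / 2"
      unfolding half using mult_right_mono[OF _ h_nonneg] by fastforce
    then have "lam * h ((1/2) *\<^sub>R u) \<le> lam * h u / 2"
      using lam by simp
    moreover have "zeta ((1/2) *\<^sub>R u - u) = - zeta u / 2"
      by (simp add: blinfun.diff_right blinfun.scaleR_right)
    ultimately show ?thesis
      using supp[of "(1/2) *\<^sub>R u"] u by simp
  qed
  moreover have "h 0 = 0"
    using abs_p_homogeneous_zero[OF hom] by simp
  ultimately have "lam * h u + zeta (v - u) \<le> lam * h v" for v
    using supp by (cases "v = 0") (auto simp: blinfun.minus_right)
  then have "h u + zeta (v - u) / lam \<le> h v" for v
    using lam by (simp add: field_simps)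
  then show ?thesis
    unfolding subdiff_def by (simp add: blinfun.scaleR_left divide_inverse_commute)
qed

theorem mainTheorem4:
  fixes J H :: "'a::banach \<Rightarrow> ereal" and p c :: real and ubar :: 'a and zeta :: "'a \<Rightarrow>\<^sub>L real"
  assumes refl: "reflexive_space TYPE('a)"
    and p: "1 < p"
    and J: "Gamma0 J"
    and H: "Gamma0 H"
    and Hhom: "abs_p_homogeneous p H"
    and Hfin: "\<forall>u. H u \<noteq> \<infinity>"
    and Hnorm: "is_norm_fun (\<lambda>u. (p * real_of_ereal (H u)) powr (1 / p))"
    and c: "0 < c" "\<forall>u. H u \<le> ereal c * J u"
    and ubar: "ubar \<noteq> 0"
    and maxR: "\<forall>u. u \<noteq> 0 \<longrightarrow> rayleigh J H u \<le> rayleigh J H ubar"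
    and finR: "rayleigh J H ubar < \<infinity>"
    and zeta: "zeta \<in> subdiff J ubar"
  shows "(inverse (real_of_ereal (rayleigh J H ubar))) *\<^sub>R zeta \<in> subdiff H ubar
         \<and> p_eigenvector J H ubar zeta (real_of_ereal (rayleigh J H ubar))"
proof -
  have H_pos: "0 < H u" if "u \<noteq> 0" for u
    using H Hhom Hnorm that unfolding Gamma0_def by (blast intro: abs_p_homogeneous_norm_pos)
  have J_proper: "J u \<noteq> -\<infinity>" for u
    using J unfolding Gamma0_def proper_fun_def by blast
  obtain lam where R: "rayleigh J H ubar = ereal lam"
    using finR J_proper[of ubar] H_pos[OF ubar] Hfin
    by (cases "J ubar"; cases "H ubar") (auto simp: rayleigh_def)
  have lam_pos: "0 < lam"
    using rayleigh_pos_of_growth[OF c(2)[rule_format] c(1) H_pos[OF ubar] _ R] Hfin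
    by (simp add: less_top)
  define h where "h u = real_of_ereal (H u)" for u
  have H_eq: "H = (\<lambda>u. ereal (h u))"
    using H Hfin unfolding Gamma0_def proper_fun_def by (auto simp: fun_eq_iff h_def ereal_real)
  have le: "J v \<le> ereal (lam * h v)" if "v \<noteq> 0" for v
    using maxR R that H_pos[OF that] Hfin rayleigh_le_iff[of H v J lam] by (auto simp: H_eq)
  have eq: "J ubar = ereal (lam * h ubar)"
    using R H_pos[OF ubar] Hfin rayleigh_eq_iff[of H ubar J lam] by (auto simp: H_eq)
  have "inverse lam *\<^sub>R zeta \<in> subdiff H ubar"
    unfolding H_eq
    by (rule subdiff_homogeneous_at_maximizer[where p = p])
      (use p H_pos[OF ubar] ubar le eq lam_pos zeta Hhom in \<open>auto simp: H_eq\<close>)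
  then show ?thesis
    using R ubar zeta lam_pos
    by (auto simp: p_eigenvector_def intro!: bexI[of _ "inverse lam *\<^sub>R zeta"])
qed

end
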